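(* Let $0<c<2$ be arbitrary. Then for some sufficiently large $n$ there exists an $n$-dimensional cooperative, bi-quadratic Boolean network $(\{0,1\}^n,g)$ which has a periodic orbit of length at least $c^n$, and whose associated digraph $D$ is strongly connected.
   Context: An $n$-dimensional Boolean network is a pair $(\Pi,g)$ with $\Pi=\{0,1\}^n$ and $g:\Pi\to\Pi$, with dynamics $s(t+1)=g(s(t))$. A periodic orbit of length $p$ is a set of $p$ distinct states $s,g(s),\dots,g^{p-1}(s)$ with $g^p(s)=s$. The cooperative order on $\Pi$ is $s\le r$ iff $s_i\le r_i$ for all $i$; the network is cooperative if $s\le r$ implies $g(s)\le g(r)$. The associated digraph $D$ has vertex set $\{1,\dots,n\}$, and $\langle i,j\rangle$ is an arc iff there exist states $s,r\in\Pi$ with $s_i<r_i$, $s_k=r_k$ for all $k\ne i$, and $g(s)_j<g(r)_j$. The network is bi-quadratic if every vertex of $D$ has indegree at most $2$ and outdegree at most $2$. *)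

theory Defs
  imports Complex_Main
begin

definition states :: "nat \<Rightarrow> bool list set" where
  "states n = {s. length s = n}"

definition boolean_network :: "nat \<Rightarrow> (bool list \<Rightarrow> bool list) \<Rightarrow> bool" where
  "boolean_network n g \<longleftrightarrow> (\<forall>s\<in>states n. g s \<in> states n)"

definition coop_le :: "bool list \<Rightarrow> bool list \<Rightarrow> bool" where
  "coop_le s r \<longleftrightarrow> length s = length r \<and> (\<forall>i<length s. s ! i \<le> r ! i)"

definition cooperative :: "nat \<Rightarrow> (bool list \<Rightarrow> bool list) \<Rightarrow> bool" where
  "cooperative n g \<longleftrightarrow>
     (\<forall>s\<in>states n. \<forall>r\<in>states n. coop_le s r \<longrightarrow> coop_le (g s) (g r))"

definition arc :: "nat \<Rightarrow> (bool list \<Rightarrow> bool list) \<Rightarrow> nat \<Rightarrow> nat \<Rightarrow> bool" where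
  "arc n g i j \<longleftrightarrow> i < n \<and> j < n \<and>
     (\<exists>s\<in>states n. \<exists>r\<in>states n. s ! i < r ! i \<and> (\<forall>k<n. k \<noteq> i \<longrightarrow> s ! k = r ! k)
        \<and> g s ! j < g r ! j)"

definition indegree :: "nat \<Rightarrow> (bool list \<Rightarrow> bool list) \<Rightarrow> nat \<Rightarrow> nat" where
  "indegree n g j = card {i. arc n g i j}"

definition outdegree :: "nat \<Rightarrow> (bool list \<Rightarrow> bool list) \<Rightarrow> nat \<Rightarrow> nat" where
  "outdegree n g i = card {j. arc n g i j}"

definition bi_quadratic :: "nat \<Rightarrow> (bool list \<Rightarrow> bool list) \<Rightarrow> bool" where
  "bi_quadratic n g \<longleftrightarrow> (\<forall>v<n. indegree n g v \<le> 2 \<and> outdegree n g v \<le> 2)"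

definition strongly_connected :: "nat \<Rightarrow> (bool list \<Rightarrow> bool list) \<Rightarrow> bool" where
  "strongly_connected n g \<longleftrightarrow>
     (\<forall>i<n. \<forall>j<n. (i, j) \<in> {(a, b). arc n g a b}\<^sup>*)"

definition periodic_orbit :: "nat \<Rightarrow> (bool list \<Rightarrow> bool list) \<Rightarrow> bool list \<Rightarrow> nat \<Rightarrow> bool" where
  "periodic_orbit n g s p \<longleftrightarrow> s \<in> states n \<and> p \<ge> 1 \<and> (g ^^ p) s = s \<and>
     inj_on (\<lambda>k. (g ^^ k) s) {0..<p}"

end

theory Submission
  imports Defs
begin

(* We build, for every k \<ge> 2 and every large m, an explicit monotone network of
   fan-in-two AND/OR gates that simulates a one-dimensional "counter" sequence of cells.
   The cells come in blocks of m+1 (a marker followed by m base-B digits with carry flags),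
   every cell is a fixed function of the cells m+2 and m+1 places before it, and consecutive
   blocks spell consecutive numbers modulo B^m; hence the sequence, and with it the network,
   has period at least B^m.  A cell is encoded by a word of length U = 2k+2 and constant
   weight k+1 (two complementary rail bits and a balanced word of length 2k), so B = C(2k,k)-1.
   Words of equal weight form an antichain, which turns the local rule into a monotone DNF.
   The network consists of U shift registers ("rings") holding the recent cells, delay chains
   feeding the literals, AND chains and OR chains evaluating the DNF into the ring heads, and
   one AND chain over the ring tails that is identically false (the rails are complementary)
   and only serves to make the digraph strongly connected.  Every node is read by at most two
   gates, so the network is bi-quadratic; monotone gates make it cooperative.  Its size is
   U*m + O_k(1), and B^(1/U) \<rightarrow> 2, which gives orbits of length at least c^n for any c < 2. *)

section \<open>Networks of fan-in-two monotone gates\<close>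

datatype 'v gate = Copy 'v | Conj 'v 'v | Disj 'v 'v

fun inputs :: "'v gate \<Rightarrow> 'v list" where
  "inputs (Copy a) = [a]" | "inputs (Conj a b) = [a, b]" | "inputs (Disj a b) = [a, b]"

fun eval_gate :: "('v \<Rightarrow> bool) \<Rightarrow> 'v gate \<Rightarrow> bool" where
  "eval_gate f (Copy a) = f a"
| "eval_gate f (Conj a b) = (f a \<and> f b)"
| "eval_gate f (Disj a b) = (f a \<or> f b)"

(* A gate is proper if its inputs are distinct; then every input genuinely influences it. *)
fun proper_gate :: "'v gate \<Rightarrow> bool" where
  "proper_gate (Copy a) = True"
| "proper_gate (Conj a b) = (a \<noteq> b)"
| "proper_gate (Disj a b) = (a \<noteq> b)"

lemma eval_gate_cong: "(\<And>w. w \<in> set (inputs x) \<Longrightarrow> f w = h w) \<Longrightarrow> eval_gate f x = eval_gate h x"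
  by (cases x) auto

lemma eval_gate_mono: "(\<And>w. w \<in> set (inputs x) \<Longrightarrow> f w \<le> h w) \<Longrightarrow> eval_gate f x \<le> eval_gate h x"
  by (cases x) (auto simp: le_bool_def)

(* A gate network: a duplicate-free list of named nodes, each computing a proper gate of
   nodes of the list.  Node number i of the list is coordinate i of the Boolean network. *)
locale gate_network =
  fixes nodes :: "'v list" and G :: "'v \<Rightarrow> 'v gate"
  assumes dist: "distinct nodes"
    and closed: "\<And>v w. v \<in> set nodes \<Longrightarrow> w \<in> set (inputs (G v)) \<Longrightarrow> w \<in> set nodes"
    and proper: "\<And>v. v \<in> set nodes \<Longrightarrow> proper_gate (G v)"
begin

abbreviation "n_nodes \<equiv> length nodes"

definition idx :: "'v \<Rightarrow> nat" where
  "idx w = (THE i. i < length nodes \<and> nodes ! i = w)"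

lemma idx_nth: "i < n_nodes \<Longrightarrow> idx (nodes ! i) = i"
  unfolding idx_def using dist by (auto intro!: the_equality simp: nth_eq_iff_index_eq)

lemma idx_mem: "w \<in> set nodes \<Longrightarrow> idx w < n_nodes \<and> nodes ! idx w = w"
  by (metis in_set_conv_nth idx_nth)

definition net :: "bool list \<Rightarrow> bool list" where
  "net s = map (\<lambda>v. eval_gate (\<lambda>w. s ! idx w) (G v)) nodes"

lemma net_nth: "j < n_nodes \<Longrightarrow> net s ! j = eval_gate (\<lambda>w. s ! idx w) (G (nodes ! j))"
  by (simp add: net_def)

lemma net_boolean_network: "boolean_network n_nodes net"
  by (simp add: boolean_network_def states_def net_def)

lemma net_cooperative: "cooperative n_nodes net"
  unfolding cooperative_def
proof (intro ballI impI)
  fix s r assume s: "s \<in> states n_nodes" and r: "r \<in> states n_nodes" and le: "coop_le s r"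
  show "coop_le (net s) (net r)"
    unfolding coop_le_def
  proof (intro conjI allI impI)
    show "length (net s) = length (net r)" by (simp add: net_def)
    fix j assume j: "j < length (net s)"
    hence j': "j < n_nodes" by (simp add: net_def)
    show "net s ! j \<le> net r ! j" unfolding net_nth[OF j']
    proof (rule eval_gate_mono)
      fix w assume "w \<in> set (inputs (G (nodes ! j)))"
      hence "w \<in> set nodes" using closed[OF nth_mem[OF j']] by auto
      hence "idx w < n_nodes" using idx_mem by auto
      thus "s ! idx w \<le> r ! idx w" using le s r by (auto simp: coop_le_def states_def)
    qed
  qed
qed

lemma arc_imp_input:
  assumes "arc n_nodes net i j"
  shows "i < n_nodes \<and> j < n_nodes \<and> nodes ! i \<in> set (inputs (G (nodes ! j)))"
proof -
  from assms obtain s r where ij: "i < n_nodes" "j < n_nodes"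
    and eq: "\<forall>k<n_nodes. k \<noteq> i \<longrightarrow> s ! k = r ! k" and lt: "net s ! j < net r ! j"
    unfolding arc_def by blast
  show ?thesis
  proof (rule ccontr)
    assume "\<not> ?thesis"
    hence nin: "nodes ! i \<notin> set (inputs (G (nodes ! j)))" using ij by auto
    have "net s ! j = net r ! j" unfolding net_nth[OF ij(2)]
    proof (rule eval_gate_cong)
      fix w assume w: "w \<in> set (inputs (G (nodes ! j)))"
      hence wn: "w \<in> set nodes" using closed[OF nth_mem[OF ij(2)]] by auto
      have "idx w \<noteq> i" using idx_mem[OF wn] nin w by auto
      thus "s ! idx w = r ! idx w" using eq idx_mem[OF wn] by auto
    qed
    thus False using lt by simp
  qed
qed

lemma arc_witness:
  assumes "idx w < n_nodes" "idx v < n_nodes" "length s = n_nodes" "length r = n_nodes"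
    "\<And>k. k < n_nodes \<Longrightarrow> k \<noteq> idx w \<Longrightarrow> s ! k = r ! k"
    "s ! idx w < r ! idx w" "net s ! idx v < net r ! idx v"
  shows "arc n_nodes net (idx w) (idx v)"
  unfolding arc_def using assms by (auto simp: states_def)

(* Conversely, every input of a proper gate gives an arc: flip the input in the all-False
   state (for Copy and Disj) or in the all-True state (for Conj). *)
lemma input_arc:
  assumes v: "v \<in> set nodes" and w: "w \<in> set (inputs (G v))"
  shows "arc n_nodes net (idx w) (idx v)"
proof -
  have wn: "w \<in> set nodes" using closed v w by auto
  note iv = idx_mem[OF v] and iw = idx_mem[OF wn]
  have pr: "proper_gate (G v)" using proper v .
  show ?thesis
  proof (cases "G v")
    case (Copy a)
    hence a: "a = w" using w by simp
    show ?thesis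
      by (rule arc_witness[where s="replicate n_nodes False"
            and r="(replicate n_nodes False)[idx w := True]"])
        (use iv iw Copy a in \<open>auto simp: net_nth nth_list_update\<close>)
  next
    case (Conj a b)
    hence ab: "a \<noteq> b" and wab: "w = a \<or> w = b" using pr w by auto
    have an: "a \<in> set nodes" "b \<in> set nodes" using closed v Conj by auto
    have ixab: "idx a \<noteq> idx b" using idx_mem[OF an(1)] idx_mem[OF an(2)] ab by metis
    show ?thesis
      by (rule arc_witness[where r="replicate n_nodes True"
            and s="(replicate n_nodes True)[idx w := False]"])
        (use iv iw Conj wab ixab idx_mem[OF an(1)] idx_mem[OF an(2)]
          in \<open>auto simp: net_nth nth_list_update\<close>)
  next
    case (Disj a b)
    hence ab: "a \<noteq> b" and wab: "w = a \<or> w = b" using pr w by auto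
    have an: "a \<in> set nodes" "b \<in> set nodes" using closed v Disj by auto
    have ixab: "idx a \<noteq> idx b" using idx_mem[OF an(1)] idx_mem[OF an(2)] ab by metis
    show ?thesis
      by (rule arc_witness[where s="replicate n_nodes False"
            and r="(replicate n_nodes False)[idx w := True]"])
        (use iv iw Disj wab ixab idx_mem[OF an(1)] idx_mem[OF an(2)]
          in \<open>auto simp: net_nth nth_list_update\<close>)
  qed
qed

lemma net_indegree: "j < n_nodes \<Longrightarrow> indegree n_nodes net j \<le> 2"
proof -
  assume j: "j < n_nodes"
  have "{i. arc n_nodes net i j} \<subseteq> idx ` set (inputs (G (nodes ! j)))"
  proof
    fix i assume "i \<in> {i. arc n_nodes net i j}"
    hence "i < n_nodes" "nodes ! i \<in> set (inputs (G (nodes ! j)))" using arc_imp_input by auto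
    thus "i \<in> idx ` set (inputs (G (nodes ! j)))" using idx_nth by force
  qed
  hence "card {i. arc n_nodes net i j} \<le> card (idx ` set (inputs (G (nodes ! j))))"
    by (simp add: card_mono)
  also have "\<dots> \<le> card (set (inputs (G (nodes ! j))))" by (rule card_image_le) simp
  also have "\<dots> \<le> length (inputs (G (nodes ! j)))" by (rule card_length)
  also have "\<dots> \<le> 2" by (cases "G (nodes ! j)") auto
  finally show ?thesis by (simp add: indegree_def)
qed

lemma net_outdegree:
  assumes readers: "\<And>w. w \<in> set nodes \<Longrightarrow> card {v \<in> set nodes. w \<in> set (inputs (G v))} \<le> 2"
  shows "i < n_nodes \<Longrightarrow> outdegree n_nodes net i \<le> 2"
proof -
  assume i: "i < n_nodes"
  have "{j. arc n_nodes net i j} \<subseteq> idx ` {v \<in> set nodes. nodes ! i \<in> set (inputs (G v))}"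
  proof
    fix j assume "j \<in> {j. arc n_nodes net i j}"
    hence "j < n_nodes" "nodes ! i \<in> set (inputs (G (nodes ! j)))" using arc_imp_input by auto
    thus "j \<in> idx ` {v \<in> set nodes. nodes ! i \<in> set (inputs (G v))}" using idx_nth
      by (metis (mono_tags, lifting) image_eqI mem_Collect_eq nth_mem)
  qed
  hence "card {j. arc n_nodes net i j} \<le> card (idx ` {v \<in> set nodes. nodes ! i \<in> set (inputs (G v))})"
    by (simp add: card_mono)
  also have "\<dots> \<le> card {v \<in> set nodes. nodes ! i \<in> set (inputs (G v))}" by (rule card_image_le) simp
  also have "\<dots> \<le> 2" using readers i by simp
  finally show ?thesis by (simp add: outdegree_def)
qed

lemma net_bi_quadratic:
  assumes "\<And>w. w \<in> set nodes \<Longrightarrow> card {v \<in> set nodes. w \<in> set (inputs (G v))} \<le> 2"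
  shows "bi_quadratic n_nodes net"
  using net_indegree net_outdegree[OF assms] by (simp add: bi_quadratic_def)

lemma net_simulates:
  assumes "\<And>v. v \<in> set nodes \<Longrightarrow> eval_gate (\<lambda>w. sem w t) (G v) = sem v (Suc t)"
  shows "net (map (\<lambda>v. sem v t) nodes) = map (\<lambda>v. sem v (Suc t)) nodes"
proof (rule nth_equalityI)
  show "length (net (map (\<lambda>v. sem v t) nodes)) = length (map (\<lambda>v. sem v (Suc t)) nodes)"
    by (simp add: net_def)
  fix j assume "j < length (net (map (\<lambda>v. sem v t) nodes))"
  hence j: "j < n_nodes" by (simp add: net_def)
  have "net (map (\<lambda>v. sem v t) nodes) ! j = eval_gate (\<lambda>w. sem w t) (G (nodes ! j))"
    unfolding net_nth[OF j]
    by (rule eval_gate_cong) (use closed[OF nth_mem[OF j]] idx_mem in fastforce)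
  also have "\<dots> = sem (nodes ! j) (Suc t)" using assms j by simp
  finally show "net (map (\<lambda>v. sem v t) nodes) ! j = map (\<lambda>v. sem v (Suc t)) nodes ! j"
    using j by simp
qed

definition reaches :: "'v \<Rightarrow> 'v \<Rightarrow> bool" where
  "reaches a b \<longleftrightarrow> (idx a, idx b) \<in> {(i, j). arc n_nodes net i j}\<^sup>*"

lemma reaches_refl: "reaches a a"
  by (simp add: reaches_def)

lemma reaches_trans [trans]: "reaches a b \<Longrightarrow> reaches b c \<Longrightarrow> reaches a c"
  unfolding reaches_def by (rule rtrancl_trans)

lemma reaches_input: "v \<in> set nodes \<Longrightarrow> w \<in> set (inputs (G v)) \<Longrightarrow> reaches w v"
  using input_arc by (auto simp: reaches_def)

lemma reaches_chain:
  assumes "\<And>i. lo \<le> i \<Longrightarrow> i < hi \<Longrightarrow> reaches (f i) (f (Suc i))"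
  shows "lo \<le> i \<Longrightarrow> i \<le> j \<Longrightarrow> j \<le> hi \<Longrightarrow> reaches (f i) (f j)"
proof (induction j)
  case 0 thus ?case by (simp add: reaches_refl)
next
  case (Suc j)
  show ?case
  proof (cases "i = Suc j")
    case True thus ?thesis by (simp add: reaches_refl)
  next
    case False
    thus ?thesis using Suc assms[of j] reaches_trans by simp
  qed
qed

lemma net_strongly_connected:
  assumes hub: "\<And>v. v \<in> set nodes \<Longrightarrow> reaches v hub \<and> reaches hub v"
  shows "strongly_connected n_nodes net"
  unfolding strongly_connected_def
proof (intro allI impI)
  fix i j assume "i < n_nodes" "j < n_nodes"
  hence "reaches (nodes ! i) (nodes ! j)" using hub reaches_trans by (meson nth_mem)
  thus "(i, j) \<in> {(a, b). arc n_nodes net a b}\<^sup>*"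
    using idx_nth \<open>i < n_nodes\<close> \<open>j < n_nodes\<close> by (simp add: reaches_def)
qed

end

section \<open>Periodic orbits of trajectories of finite maps\<close>

lemma least_return_periodic_orbit:
  assumes s: "s \<in> states n" and p: "0 < p" "(g ^^ p) s = s"
  defines "P \<equiv> LEAST p. 0 < p \<and> (g ^^ p) s = s"
  shows "periodic_orbit n g s P"
proof -
  have P: "0 < P" "(g ^^ P) s = s"
    using LeastI[of "\<lambda>p. 0 < p \<and> (g ^^ p) s = s", OF conjI[OF p]] by (auto simp: P_def)
  have Pmin: "P \<le> p'" if "0 < p'" "(g ^^ p') s = s" for p'
    unfolding P_def by (rule Least_le) (use that in simp)
  have "inj_on (\<lambda>i. (g ^^ i) s) {0..<P}"
  proof (rule inj_onI, rule ccontr)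
    fix i j assume "i \<in> {0..<P}" "j \<in> {0..<P}" "(g ^^ i) s = (g ^^ j) s" "i \<noteq> j"
    then obtain x y where xy: "x < y" "y < P" "(g ^^ x) s = (g ^^ y) s"
      by (cases "i < j") (auto intro: that[of i j] that[of j i])
    (* then s already returns after P - y + x < P steps *)
    have "(g ^^ (P - y + x)) s = (g ^^ (P - y)) ((g ^^ x) s)"
      by (simp add: funpow_add)
    also have "\<dots> = (g ^^ (P - y)) ((g ^^ y) s)" using xy by simp
    also have "\<dots> = (g ^^ (P - y + y)) s" by (simp only: funpow_add o_apply)
    also have "\<dots> = s" using xy P by simp
    finally have "P \<le> P - y + x" using xy by (intro Pmin) auto
    thus False using xy by simp
  qed
  thus ?thesis using s P by (simp add: periodic_orbit_def)
qed

lemma trajectory_periodic_orbit: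
  assumes step: "\<And>t. traj (Suc t) = g (traj t)" and traj: "\<And>t. traj t \<in> states n"
  shows "\<exists>a P. periodic_orbit n g (traj a) P \<and> (\<forall>x. traj (a + P + x) = traj (a + x))"
proof -
  have shift: "(g ^^ t) (traj a) = traj (a + t)" for a t
    by (induction t) (simp_all add: step)
  have "finite (states n)"
    unfolding states_def using finite_lists_length_eq[of "UNIV :: bool set"] by simp
  moreover have "range traj \<subseteq> states n" using traj by auto
  ultimately have "\<not> inj traj"
    by (metis finite_subset finite_imageD infinite_UNIV_nat)
  then obtain a b where ab: "a < b" "traj a = traj b"
    unfolding inj_def by (metis linorder_neqE_nat)
  define P where "P = (LEAST p. 0 < p \<and> (g ^^ p) (traj a) = traj a)"
  have return: "0 < b - a" "(g ^^ (b - a)) (traj a) = traj a"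
    using ab shift[of "b - a" a] by auto
  have orbit: "periodic_orbit n g (traj a) P"
    unfolding P_def by (rule least_return_periodic_orbit[OF traj return])
  have "traj (a + P + x) = traj (a + x)" for x
    using orbit shift[of P a] shift[of x "a + P"] shift[of x a]
    by (simp add: periodic_orbit_def add.assoc)
  thus ?thesis using orbit by blast
qed

section \<open>The counter sequence\<close>

(* A cell is a block marker or a base-B digit d carrying a flag f: "increment me". *)
datatype cell = Marker bool | Digit bool nat

(* A cell passes an increment to the next digit if it is a marker (every block adds one) or
   a flagged digit that overflows. *)
fun carry_out :: "nat \<Rightarrow> cell \<Rightarrow> bool" where
  "carry_out B (Marker f) = True"
| "carry_out B (Digit f d) = (f \<and> d = B - 1)"

fun succ_cell :: "nat \<Rightarrow> cell \<Rightarrow> cell \<Rightarrow> cell" where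
  "succ_cell B below (Marker f) = Marker (carry_out B below)"
| "succ_cell B below (Digit f d) = Digit (carry_out B below) (if f then Suc d mod B else d)"

(* The counter sequence: blocks of m+1 cells, a marker followed by m digits, least significant
   first; each cell is obtained by the local rule from the cells m+2 and m+1 places before. *)
function counter :: "nat \<Rightarrow> nat \<Rightarrow> nat \<Rightarrow> cell" where
  "counter B m j = (if j < m + 2 then (if j mod (Suc m) = 0 then Marker False else Digit False 0)
     else succ_cell B (counter B m (j - m - 2)) (counter B m (j - m - 1)))"
  by auto
termination by (relation "measure (\<lambda>(B, m, j). j)") auto

declare counter.simps[simp del]

fun is_marker :: "cell \<Rightarrow> bool" where
  "is_marker (Marker f) = True"
| "is_marker (Digit f d) = False"

fun valid_cell :: "nat \<Rightarrow> cell \<Rightarrow> bool" where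
  "valid_cell B (Marker f) = True"
| "valid_cell B (Digit f d) = (d < B)"

lemma counter_rec:
  "m + 2 \<le> j \<Longrightarrow> counter B m j = succ_cell B (counter B m (j - m - 2)) (counter B m (j - m - 1))"
  by (subst counter.simps) auto

lemma counter_marker_iff: "is_marker (counter B m j) \<longleftrightarrow> j mod (Suc m) = 0"
proof (induction j rule: less_induct)
  case (less j)
  show ?case
  proof (cases "j < m + 2")
    case True
    thus ?thesis by (subst counter.simps) auto
  next
    case False
    hence "is_marker (counter B m j) = is_marker (counter B m (j - Suc m))"
      by (cases "counter B m (j - m - 1)") (simp_all add: counter_rec)
    also have "\<dots> \<longleftrightarrow> (j - Suc m) mod Suc m = 0" using less False by auto
    also have "\<dots> \<longleftrightarrow> j mod Suc m = 0" using False by (simp add: mod_if)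
    finally show ?thesis .
  qed
qed

lemma counter_valid: "0 < B \<Longrightarrow> valid_cell B (counter B m j)"
proof (induction j rule: less_induct)
  case (less j)
  show ?case
  proof (cases "j < m + 2")
    case True
    thus ?thesis using less by (subst counter.simps) auto
  next
    case False
    thus ?thesis using less(1)[of "j - m - 1"] less(2)
      by (cases "counter B m (j - m - 1)") (auto simp: counter_rec)
  qed
qed

abbreviation carry_bit :: "nat \<Rightarrow> cell \<Rightarrow> nat" where
  "carry_bit B c \<equiv> of_bool (carry_out B c)"

(* The value a digit cell represents once its pending increment is performed. *)
fun digit_val :: "cell \<Rightarrow> nat" where
  "digit_val (Marker f) = 0"
| "digit_val (Digit f d) = d + of_bool f"

(* One step of the local rule on a digit is one column of a base-B addition. *)
lemma digit_val_succ_cell: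
  assumes "valid_cell B x" "\<not> is_marker x"
  shows "digit_val (succ_cell B below x) + B * carry_bit B x = digit_val x + carry_bit B below"
proof -
  obtain f d where x: "x = Digit f d" "d < B" using assms by (cases x) auto
  have "(if f then Suc d mod B else d) + B * of_bool (f \<and> d = B - 1) = d + of_bool f"
    using x(2) by (cases "Suc d = B") auto
  thus ?thesis using x by simp
qed

lemma carry_telescope:
  fixes y x c :: "nat \<Rightarrow> nat"
  assumes "\<And>i. i < m \<Longrightarrow> y i + B * c (Suc i) = x i + c i"
  shows "(\<Sum>i<m. y i * B ^ i) + c m * B ^ m = (\<Sum>i<m. x i * B ^ i) + c 0"
  using assms
proof (induction m)
  case 0 thus ?case by simp
next
  case (Suc m)
  have "(\<Sum>i<Suc m. y i * B ^ i) + c (Suc m) * B ^ Suc m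
      = (\<Sum>i<m. y i * B ^ i) + (y m + B * c (Suc m)) * B ^ m"
    by (simp add: algebra_simps)
  also have "\<dots> = (\<Sum>i<m. y i * B ^ i) + c m * B ^ m + x m * B ^ m"
    using Suc.prems[of m] by (simp add: algebra_simps)
  also have "\<dots> = (\<Sum>i<Suc m. x i * B ^ i) + c 0" using Suc by simp
  finally show ?case .
qed

definition block_val :: "nat \<Rightarrow> nat \<Rightarrow> nat \<Rightarrow> nat" where
  "block_val B m \<rho> = (\<Sum>i<m. digit_val (counter B m (\<rho> * Suc m + Suc i)) * B ^ i) mod B ^ m"

lemma block_val_Suc:
  assumes B: "0 < B"
  shows "block_val B m (Suc \<rho>) = (block_val B m \<rho> + 1) mod B ^ m"
proof -
  define old where "old i = counter B m (\<rho> * Suc m + i)" for i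
  define new where "new i = counter B m (Suc \<rho> * Suc m + Suc i)" for i
  have new: "new i = succ_cell B (old i) (old (Suc i))" for i
    using counter_rec[of m "Suc \<rho> * Suc m + Suc i" B] by (simp add: new_def old_def add.assoc)
  have digit: "\<not> is_marker (old (Suc i))" if "i < m" for i
  proof -
    have "(Suc i + \<rho> * Suc m) mod Suc m = Suc i" using that by (simp only: mod_mult_self1) simp
    thus ?thesis using counter_marker_iff[of B m] by (simp add: old_def add.commute)
  qed
  have "is_marker (old 0)"
    unfolding old_def by (subst counter_marker_iff) (simp del: mult_Suc_right)
  hence marker: "carry_bit B (old 0) = 1"
    by (cases "old 0") auto
  have "(\<Sum>i<m. digit_val (new i) * B ^ i) + carry_bit B (old m) * B ^ m
      = (\<Sum>i<m. digit_val (old (Suc i)) * B ^ i) + 1"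
    using carry_telescope[where c="\<lambda>i. carry_bit B (old i)"] digit_val_succ_cell
      counter_valid[OF B] digit marker
    by (simp add: new old_def)
  hence "(\<Sum>i<m. digit_val (new i) * B ^ i) mod B ^ m
      = ((\<Sum>i<m. digit_val (old (Suc i)) * B ^ i) + 1) mod B ^ m"
    by (metis mod_mult_self1)
  thus ?thesis by (simp add: block_val_def new_def old_def mod_Suc_eq)
qed

lemma block_val_add: "0 < B \<Longrightarrow> block_val B m (\<rho> + q) = (block_val B m \<rho> + q) mod B ^ m"
proof (induction q)
  case 0 thus ?case by (simp add: block_val_def)
next
  case (Suc q)
  thus ?case using block_val_Suc[of B m "\<rho> + q"] by (simp add: mod_Suc_eq)
qed

(* Hence every eventual period of the counter is a multiple of B^m. *)
lemma counter_period_bound: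
  assumes B: "0 < B" and P: "0 < P"
    and per: "\<And>j. j0 \<le> j \<Longrightarrow> counter B m (j + P) = counter B m j"
  shows "B ^ m \<le> P"
proof -
  have iter: "counter B m (j + q * P) = counter B m j" if "j0 \<le> j" for j q
  proof (induction q)
    case (Suc q)
    have "counter B m (j + Suc q * P) = counter B m ((j + q * P) + P)" by (simp add: algebra_simps)
    also have "\<dots> = counter B m (j + q * P)" using per that by simp
    finally show ?case using Suc by simp
  qed simp
  have "counter B m ((j0 + P) * Suc m + Suc i) = counter B m (j0 * Suc m + Suc i)" for i
    using iter[of "j0 * Suc m + Suc i" "Suc m"] by (simp add: algebra_simps)
  hence "block_val B m (j0 + P) = block_val B m j0"
    by (simp add: block_val_def)
  hence "(block_val B m j0 + P) mod B ^ m = block_val B m j0 mod B ^ m"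
    using block_val_add[OF B] by (simp add: block_val_def)
  hence "B ^ m dvd P"
    by (simp add: mod_eq_dvd_iff_nat)
  thus ?thesis using P by (rule dvd_imp_le)
qed

section \<open>A constant-weight code for cells\<close>

definition weight :: "bool list \<Rightarrow> nat" where "weight w = length (filter id w)"

lemma weight_card: "weight w = card {i. i < length w \<and> w ! i}"
  unfolding weight_def by (simp add: length_filter_conv_card)

lemma weight_simps[simp]:
  "weight [] = 0" "weight (x # xs) = (if x then Suc (weight xs) else weight xs)"
  "weight (xs @ ys) = weight xs + weight ys"
  by (auto simp: weight_def)

lemma equal_weight_eq:
  assumes len: "length xs = length ys" and le: "\<forall>i<length xs. xs ! i \<longrightarrow> ys ! i"
    and wt: "weight xs = weight ys"
  shows "xs = ys"
proof -
  have sub: "{i. i < length xs \<and> xs ! i} \<subseteq> {i. i < length ys \<and> ys ! i}" using len le by auto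
  have eq: "{i. i < length xs \<and> xs ! i} = {i. i < length ys \<and> ys ! i}"
    by (rule card_subset_eq[OF _ sub]) (use wt in \<open>simp_all add: weight_card\<close>)
  show ?thesis
  proof (rule nth_equalityI)
    fix i assume "i < length xs"
    thus "xs ! i = ys ! i" using eq[unfolded set_eq_iff, rule_format, of i] len by simp
  qed (rule len)
qed

definition half_words :: "nat \<Rightarrow> bool list set" where
  "half_words k = {w. length w = 2 * k \<and> weight w = k}"

lemma finite_half_words: "finite (half_words k)"
proof -
  have "half_words k \<subseteq> {w. length w = 2 * k}" by (auto simp: half_words_def)
  thus ?thesis using finite_lists_length_eq[of "UNIV :: bool set"] by (auto intro: finite_subset)
qed

lemma card_half_words: "card (half_words k) = (2 * k) choose k"
proof -
  let ?n = "2 * k"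
  define f where "f w = {i. i < ?n \<and> w ! i}" for w :: "bool list"
  have "bij_betw f (half_words k) {S. S \<subseteq> {0..<?n} \<and> card S = k}"
  proof (rule bij_betw_byWitness[where f'="\<lambda>S. map (\<lambda>i. i \<in> S) [0..<?n]"])
    show "\<forall>w\<in>half_words k. map (\<lambda>i. i \<in> f w) [0..<?n] = w"
      by (auto simp: half_words_def f_def intro!: nth_equalityI)
    show "\<forall>S\<in>{S. S \<subseteq> {0..<?n} \<and> card S = k}. f (map (\<lambda>i. i \<in> S) [0..<?n]) = S"
      by (auto simp: f_def)
    show "f ` half_words k \<subseteq> {S. S \<subseteq> {0..<?n} \<and> card S = k}"
      by (auto simp: f_def half_words_def weight_card)
    show "(\<lambda>S. map (\<lambda>i. i \<in> S) [0..<?n]) ` {S. S \<subseteq> {0..<?n} \<and> card S = k} \<subseteq> half_words k"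
    proof
      fix w assume "w \<in> (\<lambda>S. map (\<lambda>i. i \<in> S) [0..<?n]) ` {S. S \<subseteq> {0..<?n} \<and> card S = k}"
      then obtain S where S: "S \<subseteq> {0..<?n}" "card S = k" and w: "w = map (\<lambda>i. i \<in> S) [0..<?n]"
        by auto
      have "{i. i < length w \<and> w ! i} = S" using S w by auto
      thus "w \<in> half_words k" using S w by (auto simp: half_words_def weight_card)
    qed
  qed
  hence "card (half_words k) = card {S. S \<subseteq> {0..<?n} \<and> card S = k}" by (rule bij_betw_same_card)
  also have "\<dots> = ?n choose k" using n_subsets[of "{0..<?n}" k] by simp
  finally show ?thesis .
qed

definition half_list :: "nat \<Rightarrow> bool list list" where
  "half_list k = (SOME xs. set xs = half_words k \<and> distinct xs)"

lemma half_list: "set (half_list k) = half_words k" "distinct (half_list k)"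
  using someI_ex[OF finite_distinct_list[OF finite_half_words[of k]]] unfolding half_list_def by auto

lemma length_half_list: "length (half_list k) = (2 * k) choose k"
  using half_list card_half_words distinct_card by metis

(* One balanced word codes the marker, the others the digits 0 .. B-1. *)
definition base :: "nat \<Rightarrow> nat" where "base k = length (half_list k) - 1"

lemma base_ge_3: "2 \<le> k \<Longrightarrow> 3 \<le> base k"
proof -
  assume k: "2 \<le> k"
  have "(2 * k) choose 1 \<le> (2 * k) choose k" by (rule binomial_maximum')
  thus ?thesis using k length_half_list[of k] by (simp add: base_def)
qed

lemma half_list_nth:
  "i < length (half_list k) \<Longrightarrow> length (half_list k ! i) = 2 * k \<and> weight (half_list k ! i) = k"
  using half_list(1)[of k] nth_mem[of i "half_list k"] by (auto simp: half_words_def)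

lemma half_list_nonempty: "0 < length (half_list k)"
  using length_half_list[of k] by simp

fun flag :: "cell \<Rightarrow> bool" where
  "flag (Marker f) = f"
| "flag (Digit f d) = f"

fun code :: "cell \<Rightarrow> nat" where
  "code (Marker f) = 0"
| "code (Digit f d) = Suc d"

definition encode :: "nat \<Rightarrow> cell \<Rightarrow> bool list" where
  "encode k c = [flag c, \<not> flag c] @ half_list k ! code c"

lemma encode_simps[simp]:
  "encode k (Marker f) = [f, \<not> f] @ half_list k ! 0"
  "encode k (Digit f d) = [f, \<not> f] @ half_list k ! Suc d"
  by (simp_all add: encode_def)

lemma valid_code: "valid_cell (base k) c \<Longrightarrow> code c < length (half_list k)"
  using half_list_nonempty[of k] by (cases c) (auto simp: base_def)

lemma encode_props:
  assumes "valid_cell (base k) c"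
  shows "length (encode k c) = 2 * k + 2 \<and> weight (encode k c) = Suc k"
  using half_list_nth[OF valid_code[OF assms]] by (auto simp: encode_def)

lemma encode_rails: "encode k c ! 0 = (\<not> encode k c ! 1)"
  by (simp add: encode_def)

lemma encode_inj:
  assumes "valid_cell (base k) c" "valid_cell (base k) c'" "encode k c = encode k c'"
  shows "c = c'"
proof -
  have "flag c = flag c'" "half_list k ! code c = half_list k ! code c'"
    using assms(3) by (simp_all add: encode_def)
  hence "code c = code c'"
    using nth_eq_iff_index_eq[OF half_list(2) valid_code[OF assms(1)] valid_code[OF assms(2)]] by simp
  thus ?thesis using \<open>flag c = flag c'\<close> by (cases c; cases c') auto
qed

lemma encode_antichain:
  assumes "valid_cell (base k) c" "valid_cell (base k) c'"
    and "\<forall>i<2 * k + 2. encode k c ! i \<longrightarrow> encode k c' ! i"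
  shows "c = c'"
  using equal_weight_eq[of "encode k c" "encode k c'"] encode_props[OF assms(1)]
    encode_props[OF assms(2)] assms encode_inj
  by auto

lemma half_word_with_bit:
  assumes "0 < k" "p < 2 * k"
  shows "\<exists>i<length (half_list k). half_list k ! i ! p"
proof -
  define w where "w = (if p < k then replicate k True @ replicate k False
                        else replicate k False @ replicate k True)"
  have "w \<in> half_words k" by (auto simp: w_def half_words_def weight_def)
  moreover have "w ! p" using assms by (auto simp: w_def nth_append)
  ultimately show ?thesis using half_list(1)[of k] by (metis in_set_conv_nth)
qed

section \<open>The network\<close>

(* Parameters for a given k: U = 2k+2 bits per cell, and the DNF of the local rule has one
   term per pair of valid cells (the cell below and the cell itself). *)
definition width :: "nat \<Rightarrow> nat" where "width k = 2 * k + 2"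

definition cell_list :: "nat \<Rightarrow> cell list" where
  "cell_list k = [Marker False, Marker True]
     @ map (Digit False) [0..<base k] @ map (Digit True) [0..<base k]"

lemma cell_list_mem: "c \<in> set (cell_list k) \<longleftrightarrow> valid_cell (base k) c"
  by (cases c) (auto simp: cell_list_def)

definition pair_list :: "nat \<Rightarrow> (cell \<times> cell) list" where
  "pair_list k = List.product (cell_list k) (cell_list k)"

definition npairs :: "nat \<Rightarrow> nat" where "npairs k = length (pair_list k)"

definition ones :: "bool list \<Rightarrow> nat list" where
  "ones w = filter (\<lambda>r. w ! r) [0..<length w]"

lemma length_ones: "length (ones w) = weight w"
  unfolding ones_def weight_card by (simp add: length_filter_conv_card cong: conj_cong)

lemma set_ones: "set (ones w) = {r. r < length w \<and> w ! r}"
  unfolding ones_def by auto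

(* The literals of the DNF term recognising a pair: (1, r) asks for bit r of the cell below
   (which lies m+2 places back), (0, r) for bit r of the cell itself (m+1 places back). *)
definition pair_lits :: "nat \<Rightarrow> cell \<times> cell \<Rightarrow> (nat \<times> nat) list" where
  "pair_lits k p = map (\<lambda>r. (1, r)) (ones (encode k (fst p))) @ map (\<lambda>r. (0, r)) (ones (encode k (snd p)))"

(* Term \<tau> = 0 of output bit q is a fixed pair producing bit q whose first literal is
   (1, 0); it links ring 0 to every ring head.  Term \<tau> > 0 is pair number \<tau> - 1 when that
   pair produces bit q, and otherwise a harmless copy of term 0. *)
definition good_pair :: "nat \<Rightarrow> nat \<Rightarrow> cell \<times> cell \<Rightarrow> bool" where
  "good_pair k q p = (p \<in> set (pair_list k) \<and> encode k (succ_cell (base k) (fst p) (snd p)) ! q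
     \<and> encode k (fst p) ! 0)"

definition default_pair :: "nat \<Rightarrow> nat \<Rightarrow> cell \<times> cell" where
  "default_pair k q = (SOME p. good_pair k q p)"

definition term_pair :: "nat \<Rightarrow> nat \<Rightarrow> nat \<Rightarrow> cell \<times> cell" where
  "term_pair k q \<tau> = (if \<tau> = 0 then default_pair k q else
     (if encode k (succ_cell (base k) (fst (pair_list k ! (\<tau> - 1))) (snd (pair_list k ! (\<tau> - 1)))) ! q
      then pair_list k ! (\<tau> - 1) else default_pair k q))"

definition literal :: "nat \<Rightarrow> nat \<Rightarrow> nat \<Rightarrow> nat \<Rightarrow> nat \<times> nat" where
  "literal k q \<tau> i = pair_lits k (term_pair k q \<tau>) ! i"

(* Literal i of term \<tau> of bit q gets its own index tap < ntaps and is read from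
   ring position tap_pos = R - 1 - tap, so that every ring node feeds at most one delay chain.
   The delay chain has length delay_len, chosen so that the literal reaches the AND chain
   exactly when needed; lag is the time still to go through the AND and OR chains. *)
definition lag0 :: "nat \<Rightarrow> nat" where "lag0 k = npairs k + width k + 1"
definition lag :: "nat \<Rightarrow> nat \<Rightarrow> nat \<Rightarrow> nat" where "lag k \<tau> i = npairs k - \<tau> + width k - i + 1"
definition tap :: "nat \<Rightarrow> nat \<Rightarrow> nat \<Rightarrow> nat \<Rightarrow> nat" where
  "tap k q \<tau> i = (q * Suc (npairs k) + \<tau>) * width k + i"
definition ntaps :: "nat \<Rightarrow> nat" where "ntaps k = width k * Suc (npairs k) * width k"
definition delay_len :: "nat \<Rightarrow> nat \<Rightarrow> nat \<Rightarrow> nat \<Rightarrow> nat" where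
  "delay_len k q \<tau> i = fst (literal k q \<tau> i) + lag0 k + 1 + tap k q \<tau> i - lag k \<tau> i"
definition max_delay :: "nat \<Rightarrow> nat" where "max_delay k = lag0 k + ntaps k + 2"

definition ring_len :: "nat \<Rightarrow> nat \<Rightarrow> nat" where "ring_len k m = m - lag0 k"
definition tap_pos :: "nat \<Rightarrow> nat \<Rightarrow> nat \<Rightarrow> nat \<Rightarrow> nat \<Rightarrow> nat" where
  "tap_pos k m q \<tau> i = ring_len k m - 1 - tap k q \<tau> i"

(* Nodes: Ring q j is position j of the shift register of bit q; Delay q \<tau> i d is stage d of
   the delay chain of a literal; AndN q \<tau> i is the conjunction of literals 0..i of term \<tau>;
   OrN q \<tau> is the disjunction of terms 0..\<tau>; Bridge i is the conjunction of the ring tails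
   0..i+1, which is always False because the tails of rings 0 and 1 are complementary rails. *)
datatype node = Ring nat nat | Delay nat nat nat nat | AndN nat nat nat | OrN nat nat | Bridge nat

fun gate_of :: "nat \<Rightarrow> nat \<Rightarrow> node \<Rightarrow> node gate" where
  "gate_of k m (Ring q j) = (if j = 0 then Copy (OrN q (npairs k)) else Copy (Ring q (j - 1)))"
| "gate_of k m (Delay q \<tau> i d) = (if d \<le> 1 then Copy (Ring (snd (literal k q \<tau> i)) (tap_pos k m q \<tau> i))
     else Copy (Delay q \<tau> i (d - 1)))"
| "gate_of k m (AndN q \<tau> i) = (if i = 0 then Copy (Delay q \<tau> 0 (delay_len k q \<tau> 0))
     else Conj (AndN q \<tau> (i - 1)) (Delay q \<tau> i (delay_len k q \<tau> i)))"
| "gate_of k m (OrN q \<tau>) = (if \<tau> = 0 then (if q = 0 then Disj (AndN 0 0 (width k - 1)) (Bridge (width k - 2))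
       else Copy (AndN q 0 (width k - 1)))
     else Disj (OrN q (\<tau> - 1)) (AndN q \<tau> (width k - 1)))"
| "gate_of k m (Bridge i) = (if i = 0 then Conj (Ring 0 (ring_len k m - 1)) (Ring 1 (ring_len k m - 1))
     else Conj (Bridge (i - 1)) (Ring (Suc i) (ring_len k m - 1)))"

lemma proper_gate_of: "proper_gate (gate_of k m v)"
  by (cases v) auto

definition and_index :: "nat \<Rightarrow> (nat \<times> nat \<times> nat) list" where
  "and_index k = List.product [0..<width k] (List.product [0..<Suc (npairs k)] [0..<width k])"

(* All nodes other than the rings; their number depends on k only. *)
definition aux_nodes :: "nat \<Rightarrow> node list" where
  "aux_nodes k =
     map (\<lambda>(q, \<tau>, i, d). Delay q \<tau> i d)
       (filter (\<lambda>(q, \<tau>, i, d). 1 \<le> d \<and> d \<le> delay_len k q \<tau> i)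
         (List.product [0..<width k] (List.product [0..<Suc (npairs k)]
           (List.product [0..<width k] [0..<Suc (max_delay k)]))))
   @ map (\<lambda>(q, \<tau>, i). AndN q \<tau> i) (and_index k)
   @ map (\<lambda>(q, \<tau>). OrN q \<tau>) (List.product [0..<width k] [0..<Suc (npairs k)])
   @ map Bridge [0..<width k - 1]"

definition node_list :: "nat \<Rightarrow> nat \<Rightarrow> node list" where
  "node_list k m =
     map (\<lambda>(q, j). Ring q j) (List.product [0..<width k] [0..<ring_len k m]) @ aux_nodes k"

lemma length_node_list: "length (node_list k m) = width k * ring_len k m + length (aux_nodes k)"
  by (simp add: node_list_def)

(* The network for k \<ge> 2 and m large enough for all taps to fit on the rings. *)
locale construction =
  fixes k m :: nat
  assumes k2: "2 \<le> k" and mbig: "lag0 k + ntaps k + 1 \<le> m"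
begin

abbreviation "U \<equiv> width k"
abbreviation "N \<equiv> npairs k"
abbreviation "R \<equiv> ring_len k m"
abbreviation "B \<equiv> base k"

lemma width_ge_6: "6 \<le> U" using k2 by (simp add: width_def)
lemma width_pos: "0 < U" using width_ge_6 by simp
lemma base_ge: "3 \<le> B" using base_ge_3[OF k2] .

lemma valid_counter: "valid_cell B (counter B m u)"
  using counter_valid base_ge by simp

lemma tap_less: "q < U \<Longrightarrow> \<tau> \<le> N \<Longrightarrow> i < U \<Longrightarrow> tap k q \<tau> i < ntaps k"
proof -
  assume a: "q < U" "\<tau> \<le> N" "i < U"
  have "Suc (q * Suc N + \<tau>) \<le> U * Suc N"
    using a mult_right_mono[of "Suc q" U "Suc N"] by simp
  hence "Suc (q * Suc N + \<tau>) * U \<le> U * Suc N * U" by (rule mult_right_mono) simp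
  moreover have "tap k q \<tau> i < Suc (q * Suc N + \<tau>) * U" using a by (simp add: tap_def)
  ultimately show ?thesis by (simp add: ntaps_def)
qed

lemma tap_decode:
  assumes "\<tau> < Suc N" "i < U"
  shows "tap k q \<tau> i mod U = i \<and> tap k q \<tau> i div U mod Suc N = \<tau> \<and> tap k q \<tau> i div U div Suc N = q"
proof -
  have "tap k q \<tau> i div U = q * Suc N + \<tau>" "tap k q \<tau> i mod U = i"
    using assms width_pos by (simp_all add: tap_def)
  moreover have "(q * Suc N + \<tau>) mod Suc N = \<tau>" "(q * Suc N + \<tau>) div Suc N = q"
    using assms by (simp_all add: div_mult_self3[of "Suc N"] del: mult_Suc_right)
  ultimately show ?thesis by simp
qed

lemma ring_len_big: "ntaps k + 1 \<le> R" using mbig by (simp add: ring_len_def)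

lemma ring_len_le: "R \<le> m" by (simp add: ring_len_def)

lemma lag_le: "lag k \<tau> i \<le> lag0 k" by (simp add: lag_def lag0_def)

lemma pair_list_valid: "p \<in> set (pair_list k) \<Longrightarrow> valid_cell B (fst p) \<and> valid_cell B (snd p)"
  by (auto simp: pair_list_def cell_list_mem)

lemma pair_lits_length: "p \<in> set (pair_list k) \<Longrightarrow> length (pair_lits k p) = U"
  using pair_list_valid encode_props by (auto simp: pair_lits_def length_ones width_def)

lemma pair_lits_set: "p \<in> set (pair_list k) \<Longrightarrow> x \<in> set (pair_lits k p) \<Longrightarrow> fst x \<le> 1 \<and> snd x < U"
  using pair_list_valid encode_props by (auto simp: pair_lits_def set_ones width_def)

lemma good_pair_exists: "q < U \<Longrightarrow> \<exists>p. good_pair k q p"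
proof -
  assume q: "q < U"
  consider "q = 0" | "q = 1" | "2 \<le> q" by linarith
  thus ?thesis
  proof cases
    case 1
    have "good_pair k q (Marker True, Marker False)"
      unfolding good_pair_def pair_list_def using 1 by (simp add: cell_list_mem)
    thus ?thesis by blast
  next
    case 2
    have "good_pair k q (Digit True 0, Marker False)"
      unfolding good_pair_def pair_list_def using 2 base_ge by (simp add: cell_list_mem)
    thus ?thesis by blast
  next
    case 3
    hence q2: "q - 2 < 2 * k" and qq: "q = Suc (Suc (q - 2))" using q by (auto simp: width_def)
    obtain i where i: "i < length (half_list k)" "half_list k ! i ! (q - 2)"
      using half_word_with_bit[OF _ q2] k2 by auto
    show ?thesis
    proof (cases i)
      case 0
      have "good_pair k q (Marker True, Marker False)"
        unfolding good_pair_def pair_list_def using i 0 by (subst qq) (simp add: cell_list_mem)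
      thus ?thesis by blast
    next
      case (Suc d)
      hence d: "d < B" using i by (simp add: base_def)
      have "good_pair k q (Marker True, Digit False d)"
        unfolding good_pair_def pair_list_def using i Suc d by (subst qq) (simp add: cell_list_mem)
      thus ?thesis by blast
    qed
  qed
qed

lemma default_pair_good: "q < U \<Longrightarrow> good_pair k q (default_pair k q)"
  unfolding default_pair_def using good_pair_exists someI_ex by metis

lemma term_pair_props: "q < U \<Longrightarrow> \<tau> \<le> N \<Longrightarrow>
  term_pair k q \<tau> \<in> set (pair_list k) \<and>
   encode k (succ_cell B (fst (term_pair k q \<tau>)) (snd (term_pair k q \<tau>))) ! q"
  using default_pair_good by (auto simp: term_pair_def good_pair_def npairs_def)

lemma literal_props:
  "q < U \<Longrightarrow> \<tau> \<le> N \<Longrightarrow> i < U \<Longrightarrow> fst (literal k q \<tau> i) \<le> 1 \<and> snd (literal k q \<tau> i) < U"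
  using term_pair_props pair_lits_length pair_lits_set unfolding literal_def by (metis nth_mem)

lemma literal_first: "q < U \<Longrightarrow> literal k q 0 0 = (1, 0)"
proof -
  assume q: "q < U"
  have ok: "good_pair k q (default_pair k q)" using default_pair_good[OF q] .
  let ?w = "encode k (fst (default_pair k q))"
  have w0: "?w ! 0" using ok by (simp add: good_pair_def)
  have "[0..<length ?w] = 0 # [1..<length ?w]"
    using encode_props pair_list_valid ok by (simp add: good_pair_def upt_rec)
  hence "ones ?w = 0 # filter (\<lambda>r. ?w ! r) [1..<length ?w]" using w0 by (simp add: ones_def)
  thus ?thesis by (simp add: literal_def term_pair_def pair_lits_def)
qed

lemma delay_len_bounds:
  "q < U \<Longrightarrow> \<tau> \<le> N \<Longrightarrow> i < U \<Longrightarrow> 1 \<le> delay_len k q \<tau> i \<and> delay_len k q \<tau> i \<le> max_delay k"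
  using lag_le[of \<tau> i] literal_props[of q \<tau> i] tap_less[of q \<tau> i]
  by (auto simp: delay_len_def max_delay_def)

lemma tap_pos_less: "q < U \<Longrightarrow> \<tau> \<le> N \<Longrightarrow> i < U \<Longrightarrow> tap_pos k m q \<tau> i < R"
  using ring_len_big by (simp add: tap_pos_def)

(* Ring position + delay + remaining lag add up to the distance m+1 or m+2 of the literal. *)
lemma delay_timing: "q < U \<Longrightarrow> \<tau> \<le> N \<Longrightarrow> i < U \<Longrightarrow>
  delay_len k q \<tau> i + 1 + tap_pos k m q \<tau> i + lag k \<tau> i = Suc m + fst (literal k q \<tau> i)"
  using lag_le[of \<tau> i] tap_less[of q \<tau> i] ring_len_big mbig
  by (simp add: delay_len_def tap_pos_def ring_len_def)

fun in_range :: "node \<Rightarrow> bool" where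
  "in_range (Ring q j) = (q < U \<and> j < R)"
| "in_range (Delay q \<tau> i d) = (q < U \<and> \<tau> \<le> N \<and> i < U \<and> 1 \<le> d \<and> d \<le> delay_len k q \<tau> i)"
| "in_range (AndN q \<tau> i) = (q < U \<and> \<tau> \<le> N \<and> i < U)"
| "in_range (OrN q \<tau>) = (q < U \<and> \<tau> \<le> N)"
| "in_range (Bridge i) = (i < U - 1)"

lemma node_list_mem: "v \<in> set (node_list k m) \<longleftrightarrow> in_range v"
proof
  assume "v \<in> set (node_list k m)" thus "in_range v"
    by (auto simp: node_list_def aux_nodes_def and_index_def less_Suc_eq_le)
next
  assume iv: "in_range v"
  show "v \<in> set (node_list k m)"
  proof (cases v)
    case (Ring q j)
    thus ?thesis unfolding node_list_def aux_nodes_def and_index_def set_append set_map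
      by (intro UnI1 rev_image_eqI[where x="(q, j)"]) (use iv in auto)
  next
    case (Delay q \<tau> i d)
    thus ?thesis unfolding node_list_def aux_nodes_def and_index_def set_append set_map
      by (intro UnI2 UnI1 rev_image_eqI[where x="(q, \<tau>, i, d)"])
        (use iv delay_len_bounds[of q \<tau> i] in auto)
  next
    case (AndN q \<tau> i)
    thus ?thesis unfolding node_list_def aux_nodes_def and_index_def set_append set_map
      by (intro UnI2 UnI1 rev_image_eqI[where x="(q, \<tau>, i)"]) (use iv in auto)
  next
    case (OrN q \<tau>)
    thus ?thesis unfolding node_list_def aux_nodes_def and_index_def set_append set_map
      by (intro UnI2 UnI1 rev_image_eqI[where x="(q, \<tau>)"]) (use iv in auto)
  next
    case (Bridge i)
    thus ?thesis unfolding node_list_def aux_nodes_def and_index_def set_append set_map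
      by (intro UnI2 rev_image_eqI[where x="i"]) (use iv in auto)
  qed
qed

lemma distinct_node_list: "distinct (node_list k m)"
  unfolding node_list_def aux_nodes_def and_index_def
  by (auto simp: distinct_map inj_on_def distinct_product)

lemma in_range_inputs: "in_range v \<Longrightarrow> w \<in> set (inputs (gate_of k m v)) \<Longrightarrow> in_range w"
  using literal_props delay_len_bounds tap_pos_less width_ge_6 ring_len_big
  by (cases v) (auto split: if_splits)

sublocale G: gate_network "node_list k m" "gate_of k m"
  by unfold_locales (auto simp: distinct_node_list node_list_mem proper_gate_of intro: in_range_inputs)

section \<open>The network is bi-quadratic\<close>

(* A superset of the gates reading a given node: each node is read by its successor in its
   own chain and by at most one gate of another chain. *)
fun readers :: "node \<Rightarrow> node set" where
  "readers (Ring q j) = {if j = R - 1 then Bridge (q - 1) else Ring q (Suc j),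
     Delay ((R - 1 - j) div U div Suc N) ((R - 1 - j) div U mod Suc N) ((R - 1 - j) mod U) 1}"
| "readers (Delay q \<tau> i d) = {Delay q \<tau> i (Suc d), AndN q \<tau> i}"
| "readers (AndN q \<tau> i) = {AndN q \<tau> (Suc i), OrN q \<tau>}"
| "readers (OrN q \<tau>) = {OrN q (Suc \<tau>), Ring q 0}"
| "readers (Bridge i) = {Bridge (Suc i), OrN 0 0}"

lemma readers_card: "card (readers w) \<le> 2"
  by (cases w) (auto simp: card_insert_if)

lemma input_readers: "in_range v \<Longrightarrow> w \<in> set (inputs (gate_of k m v)) \<Longrightarrow> v \<in> readers w"
proof (cases v)
  case (Delay q \<tau> i d)
  assume a: "in_range v" "w \<in> set (inputs (gate_of k m v))"
  show ?thesis
  proof (cases "d \<le> 1")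
    case True
    have "R - 1 - tap_pos k m q \<tau> i = tap k q \<tau> i"
      using a Delay tap_less[of q \<tau> i] ring_len_big by (simp add: tap_pos_def)
    thus ?thesis using a Delay True tap_decode[of \<tau> i q] by auto
  next
    case False thus ?thesis using a Delay by auto
  qed
qed (auto split: if_splits)

lemma construction_bi_quadratic: "bi_quadratic (length (node_list k m)) G.net"
proof (rule G.net_bi_quadratic)
  fix w
  have "{v \<in> set (node_list k m). w \<in> set (inputs (gate_of k m v))} \<subseteq> readers w"
    using input_readers node_list_mem by auto
  hence "card {v \<in> set (node_list k m). w \<in> set (inputs (gate_of k m v))} \<le> card (readers w)"
    by (intro card_mono) (cases w; auto)
  thus "card {v \<in> set (node_list k m). w \<in> set (inputs (gate_of k m v))} \<le> 2"
    using readers_card by (rule order.trans)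
qed

end

section \<open>The network simulates the counter\<close>

context construction begin

definition enc_bit :: "nat \<Rightarrow> nat \<Rightarrow> bool" where "enc_bit u q = encode k (counter B m u) ! q"

(* At time t the ring heads hold cell t + lead - 1; the offset keeps all indices below valid. *)
definition lead :: nat where "lead = m + max_delay k + 2"

definition lit_val :: "nat \<times> nat \<Rightarrow> nat \<Rightarrow> bool" where
  "lit_val x u = enc_bit (u - Suc m - fst x) (snd x)"
definition term_val :: "nat \<Rightarrow> nat \<Rightarrow> nat \<Rightarrow> nat \<Rightarrow> bool" where
  "term_val q \<tau> i u = (\<forall>i'\<le>i. lit_val (literal k q \<tau> i') u)"
definition or_val :: "nat \<Rightarrow> nat \<Rightarrow> nat \<Rightarrow> bool" where
  "or_val q \<tau> u = (\<exists>\<tau>'\<le>\<tau>. term_val q \<tau>' (U - 1) u)"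

(* How far ahead of the ring heads the AND and OR nodes compute. *)
definition lead_and :: "nat \<Rightarrow> nat \<Rightarrow> nat" where "lead_and \<tau> i = N - \<tau> + U - i"
definition lead_or :: "nat \<Rightarrow> nat" where "lead_or \<tau> = N - \<tau>"

fun sem :: "node \<Rightarrow> nat \<Rightarrow> bool" where
  "sem (Ring q j) t = enc_bit (t + lead - 1 - j) q"
| "sem (Delay q \<tau> i d) t = enc_bit (t + lead - d - 1 - tap_pos k m q \<tau> i) (snd (literal k q \<tau> i))"
| "sem (AndN q \<tau> i) t = term_val q \<tau> i (t + lead + lead_and \<tau> i)"
| "sem (OrN q \<tau>) t = or_val q \<tau> (t + lead + lead_or \<tau>)"
| "sem (Bridge i) t = False"

(* A full term holds exactly on its pair: this is where the antichain property is used. *)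
lemma term_val_iff:
  assumes q: "q < U" and \<tau>: "\<tau> \<le> N" and u: "m + 2 \<le> u"
  shows "term_val q \<tau> (U - 1) u \<longleftrightarrow> term_pair k q \<tau> = (counter B m (u - m - 2), counter B m (u - m - 1))"
proof -
  define p where "p = term_pair k q \<tau>"
  have pm: "p \<in> set (pair_list k)" using term_pair_props[OF q \<tau>] by (simp add: p_def)
  have len: "length (pair_lits k p) = U" using pair_lits_length[OF pm] .
  have "term_val q \<tau> (U - 1) u \<longleftrightarrow> (\<forall>x\<in>set (pair_lits k p). lit_val x u)"
  proof -
    have "\<forall>i'. (i' \<le> U - 1) = (i' < length (pair_lits k p))" using width_pos len by auto
    hence "term_val q \<tau> (U - 1) u \<longleftrightarrow> (\<forall>i'<length (pair_lits k p). lit_val (pair_lits k p ! i') u)"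
      unfolding term_val_def literal_def p_def[symmetric] by simp
    thus ?thesis by (simp only: all_set_conv_all_nth)
  qed
  also have "\<dots> \<longleftrightarrow> (\<forall>r<U. encode k (fst p) ! r \<longrightarrow> encode k (counter B m (u - m - 2)) ! r) \<and>
                    (\<forall>r<U. encode k (snd p) ! r \<longrightarrow> encode k (counter B m (u - m - 1)) ! r)"
  proof -
    have l1: "length (encode k (fst p)) = U" "length (encode k (snd p)) = U"
      using encode_props pair_list_valid[OF pm] by (auto simp: width_def)
    have e1: "u - Suc m - 1 = u - m - 2" "u - Suc m - 0 = u - m - 1" by auto
    show ?thesis
      unfolding pair_lits_def lit_val_def enc_bit_def set_append ball_Un set_map ball_simps set_ones
      by (simp add: l1 e1 imp_conjL)
  qed
  also have "\<dots> \<longleftrightarrow> p = (counter B m (u - m - 2), counter B m (u - m - 1))"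
  proof
    assume h: "(\<forall>r<U. encode k (fst p) ! r \<longrightarrow> encode k (counter B m (u - m - 2)) ! r) \<and>
                    (\<forall>r<U. encode k (snd p) ! r \<longrightarrow> encode k (counter B m (u - m - 1)) ! r)"
    have "fst p = counter B m (u - m - 2)"
      using h pair_list_valid[OF pm] valid_counter by (intro encode_antichain[of k]) (auto simp: width_def)
    moreover have "snd p = counter B m (u - m - 1)"
      using h pair_list_valid[OF pm] valid_counter by (intro encode_antichain[of k]) (auto simp: width_def)
    ultimately show "p = (counter B m (u - m - 2), counter B m (u - m - 1))" by (simp add: prod_eq_iff)
  qed auto
  finally show ?thesis by (simp add: p_def)
qed

lemma or_val_correct:
  assumes q: "q < U" and u: "m + 2 \<le> u"
  shows "or_val q N u = enc_bit u q"
proof -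
  let ?p = "counter B m (u - m - 2)" and ?c = "counter B m (u - m - 1)"
  have Y: "enc_bit u q = encode k (succ_cell B ?p ?c) ! q"
    unfolding enc_bit_def using counter_rec[OF u] by simp
  have "or_val q N u \<longleftrightarrow> (\<exists>\<tau>\<le>N. term_pair k q \<tau> = (?p, ?c))"
    unfolding or_val_def using term_val_iff[OF q _ u] by auto
  also have "\<dots> \<longleftrightarrow> encode k (succ_cell B ?p ?c) ! q"
  proof
    assume "\<exists>\<tau>\<le>N. term_pair k q \<tau> = (?p, ?c)"
    then obtain \<tau> where "\<tau> \<le> N" "term_pair k q \<tau> = (?p, ?c)" by blast
    thus "encode k (succ_cell B ?p ?c) ! q" using term_pair_props[OF q, of \<tau>] by simp
  next
    assume e: "encode k (succ_cell B ?p ?c) ! q"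
    have "(?p, ?c) \<in> set (pair_list k)" using valid_counter by (simp add: pair_list_def cell_list_mem)
    then obtain j where j: "j < N" "pair_list k ! j = (?p, ?c)" by (auto simp: in_set_conv_nth npairs_def)
    have "term_pair k q (Suc j) = (?p, ?c)" using j e by (simp add: term_pair_def)
    thus "\<exists>\<tau>\<le>N. term_pair k q \<tau> = (?p, ?c)" using j by (intro exI[of _ "Suc j"]) auto
  qed
  finally show ?thesis using Y by simp
qed

lemma sem_step_ring:
  assumes "q < U" "j < R"
  shows "eval_gate (\<lambda>w. sem w t) (gate_of k m (Ring q j)) = sem (Ring q j) (Suc t)"
proof (cases "j = 0")
  case True
  have "m + 2 \<le> t + lead" by (simp add: lead_def)
  thus ?thesis using True or_val_correct[OF assms(1)] by (simp add: lead_or_def)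
next
  case False
  have "Suc t + lead - 1 - j = t + lead - 1 - (j - 1)"
    using False assms ring_len_le by (simp add: lead_def)
  thus ?thesis using False by simp
qed

lemma sem_step_delay:
  assumes a: "in_range (Delay q \<tau> i d)"
  shows "eval_gate (\<lambda>w. sem w t) (gate_of k m (Delay q \<tau> i d)) = sem (Delay q \<tau> i d) (Suc t)"
proof (cases "d \<le> 1")
  case True
  hence "d = 1" using a by simp
  thus ?thesis by simp
next
  case False
  have "tap_pos k m q \<tau> i < R" "delay_len k q \<tau> i \<le> max_delay k"
    using tap_pos_less delay_len_bounds a by auto
  hence "t + lead - (d - 1) - 1 - tap_pos k m q \<tau> i = Suc t + lead - d - 1 - tap_pos k m q \<tau> i"
    using False a ring_len_le by (simp add: lead_def)
  thus ?thesis using False by simp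
qed

lemma delay_delivers:
  assumes a: "q < U" "\<tau> \<le> N" "i < U"
  shows "sem (Delay q \<tau> i (delay_len k q \<tau> i)) t = lit_val (literal k q \<tau> i) (Suc t + lead + lead_and \<tau> i)"
proof -
  have T: "delay_len k q \<tau> i + 1 + tap_pos k m q \<tau> i + lag k \<tau> i = Suc m + fst (literal k q \<tau> i)"
    using delay_timing a by simp
  have "tap_pos k m q \<tau> i < R" "delay_len k q \<tau> i \<le> max_delay k"
    using tap_pos_less delay_len_bounds a by auto
  moreover have "lag k \<tau> i = Suc (lead_and \<tau> i)" using a by (simp add: lag_def lead_and_def)
  ultimately have "t + lead - delay_len k q \<tau> i - 1 - tap_pos k m q \<tau> i
      = Suc t + lead + lead_and \<tau> i - Suc m - fst (literal k q \<tau> i)"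
    using T ring_len_le by (simp add: lead_def)
  thus ?thesis by (simp add: lit_val_def)
qed

lemma sem_step_and:
  assumes a: "q < U" "\<tau> \<le> N" "i < U"
  shows "eval_gate (\<lambda>w. sem w t) (gate_of k m (AndN q \<tau> i)) = sem (AndN q \<tau> i) (Suc t)"
proof (cases "i = 0")
  case True
  thus ?thesis using delay_delivers[OF a] by (simp add: term_val_def)
next
  case False
  have "lead_and \<tau> (i - 1) = Suc (lead_and \<tau> i)" using False a by (simp add: lead_and_def)
  moreover have "term_val q \<tau> i x = (term_val q \<tau> (i - 1) x \<and> lit_val (literal k q \<tau> i) x)" for x
    using False by (cases i) (auto simp: term_val_def le_Suc_eq)
  ultimately show ?thesis using False delay_delivers[OF a] by simp
qed

lemma sem_step_or:
  assumes a: "q < U" "\<tau> \<le> N"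
  shows "eval_gate (\<lambda>w. sem w t) (gate_of k m (OrN q \<tau>)) = sem (OrN q \<tau>) (Suc t)"
proof -
  have lA: "lead_and \<tau> (U - 1) = Suc (lead_or \<tau>)"
    using a width_pos by (simp add: lead_and_def lead_or_def)
  show ?thesis
  proof (cases "\<tau> = 0")
    case True
    have "or_val q 0 x = term_val q 0 (U - 1) x" for x by (simp add: or_val_def)
    thus ?thesis using True lA by (cases "q = 0") auto
  next
    case False
    have "lead_or (\<tau> - 1) = Suc (lead_or \<tau>)" using False a by (simp add: lead_or_def)
    moreover have "or_val q \<tau> x = (or_val q (\<tau> - 1) x \<or> term_val q \<tau> (U - 1) x)" for x
      using False by (cases \<tau>) (auto simp: or_val_def le_Suc_eq)
    ultimately show ?thesis using False lA by simp
  qed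
qed

(* The bridge is identically False since the first two bits of a code word are complementary. *)
lemma sem_step_bridge: "eval_gate (\<lambda>w. sem w t) (gate_of k m (Bridge i)) = sem (Bridge i) (Suc t)"
  using encode_rails[of k] by (simp add: enc_bit_def)

lemma sem_step:
  assumes "in_range v"
  shows "eval_gate (\<lambda>w. sem w t) (gate_of k m v) = sem v (Suc t)"
proof (cases v)
  case (Ring q j) thus ?thesis using assms sem_step_ring by simp
next
  case (Delay q \<tau> i d) thus ?thesis using assms sem_step_delay by blast
next
  case (AndN q \<tau> i) thus ?thesis using assms sem_step_and by simp
next
  case (OrN q \<tau>) thus ?thesis using assms sem_step_or by simp
next
  case (Bridge i) thus ?thesis using sem_step_bridge by blast
qed

definition state_at :: "nat \<Rightarrow> bool list" where "state_at t = map (\<lambda>v. sem v t) (node_list k m)"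

lemma state_at_step: "state_at (Suc t) = G.net (state_at t)"
  unfolding state_at_def by (rule G.net_simulates[symmetric]) (use sem_step node_list_mem in auto)

end

section \<open>The digraph is strongly connected\<close>

context construction begin

abbreviation reach :: "node \<Rightarrow> node \<Rightarrow> bool" where
  "reach \<equiv> G.reaches"

lemma reach_input: "in_range v \<Longrightarrow> w \<in> set (inputs (gate_of k m v)) \<Longrightarrow> reach w v"
  using G.reaches_input[of v w] node_list_mem by auto

lemma ring_chain: "q < U \<Longrightarrow> j \<le> j' \<Longrightarrow> j' < R \<Longrightarrow> reach (Ring q j) (Ring q j')"
  by (rule G.reaches_chain[where f="Ring q" and lo=0 and hi="R - 1"]) (auto intro!: reach_input)

lemma bridge_chain: "i \<le> i' \<Longrightarrow> i' < U - 1 \<Longrightarrow> reach (Bridge i) (Bridge i')"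
  by (rule G.reaches_chain[where f=Bridge and lo=0 and hi="U - 2"]) (auto intro!: reach_input)

lemma or_chain: "q < U \<Longrightarrow> \<tau> \<le> \<tau>' \<Longrightarrow> \<tau>' \<le> N \<Longrightarrow> reach (OrN q \<tau>) (OrN q \<tau>')"
  by (rule G.reaches_chain[where f="OrN q" and lo=0 and hi=N]) (auto intro!: reach_input)

lemma and_chain: "q < U \<Longrightarrow> \<tau> \<le> N \<Longrightarrow> i \<le> i' \<Longrightarrow> i' < U \<Longrightarrow> reach (AndN q \<tau> i) (AndN q \<tau> i')"
  by (rule G.reaches_chain[where f="AndN q \<tau>" and lo=0 and hi="U - 1"]) (auto intro!: reach_input)

lemma delay_chain: "q < U \<Longrightarrow> \<tau> \<le> N \<Longrightarrow> i < U \<Longrightarrow> 1 \<le> d \<Longrightarrow> d \<le> d' \<Longrightarrow> d' \<le> delay_len k q \<tau> i \<Longrightarrow>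
   reach (Delay q \<tau> i d) (Delay q \<tau> i d')"
  by (rule G.reaches_chain[where f="Delay q \<tau> i" and lo=1 and hi="delay_len k q \<tau> i"])
    (auto intro!: reach_input)

lemma ring_to_delay: "q < U \<Longrightarrow> \<tau> \<le> N \<Longrightarrow> i < U \<Longrightarrow>
   reach (Ring (snd (literal k q \<tau> i)) (tap_pos k m q \<tau> i)) (Delay q \<tau> i 1)"
  using delay_len_bounds[of q \<tau> i] by (intro reach_input) auto

lemma delay_to_and: "q < U \<Longrightarrow> \<tau> \<le> N \<Longrightarrow> i < U \<Longrightarrow> reach (Delay q \<tau> i (delay_len k q \<tau> i)) (AndN q \<tau> i)"
  by (intro reach_input) auto

lemma and_to_or: "q < U \<Longrightarrow> \<tau> \<le> N \<Longrightarrow> reach (AndN q \<tau> (U - 1)) (OrN q \<tau>)"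
  by (intro reach_input) auto

lemma or_to_ring: "q < U \<Longrightarrow> reach (OrN q N) (Ring q 0)"
  using ring_len_big by (intro reach_input) auto

lemma ring_to_bridge: "q < U \<Longrightarrow> reach (Ring q (R - 1)) (Bridge (q - 1))"
  using width_ge_6 by (intro reach_input) (auto simp: Suc_diff_Suc)

lemma bridge_to_or: "reach (Bridge (U - 2)) (OrN 0 0)"
  using width_ge_6 by (intro reach_input) auto

(* Every node reaches Ring 0 0: follow the chains through the bridge to OrN 0 and ring 0. *)
lemma bridge_reaches_hub: "i < U - 1 \<Longrightarrow> reach (Bridge i) (Ring 0 0)"
proof -
  assume i: "i < U - 1"
  have "reach (Bridge i) (Bridge (U - 2))" using i by (intro bridge_chain) auto
  also have "reach (Bridge (U - 2)) (OrN 0 0)" by (rule bridge_to_or)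
  also have "reach (OrN 0 0) (OrN 0 N)" using width_pos by (intro or_chain) auto
  also have "reach (OrN 0 N) (Ring 0 0)" using width_pos by (intro or_to_ring)
  finally show ?thesis .
qed

lemma ring_reaches_hub: "q < U \<Longrightarrow> j < R \<Longrightarrow> reach (Ring q j) (Ring 0 0)"
proof -
  assume a: "q < U" "j < R"
  have "reach (Ring q j) (Ring q (R - 1))" using a by (intro ring_chain) auto
  also have "reach (Ring q (R - 1)) (Bridge (q - 1))" using a(1) by (rule ring_to_bridge)
  also have "reach (Bridge (q - 1)) (Ring 0 0)" using a width_ge_6 by (intro bridge_reaches_hub) auto
  finally show ?thesis .
qed

lemma or_reaches_hub: "q < U \<Longrightarrow> \<tau> \<le> N \<Longrightarrow> reach (OrN q \<tau>) (Ring 0 0)"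
proof -
  assume a: "q < U" "\<tau> \<le> N"
  have "reach (OrN q \<tau>) (OrN q N)" using a by (intro or_chain) auto
  also have "reach (OrN q N) (Ring q 0)" using a(1) by (rule or_to_ring)
  also have "reach (Ring q 0) (Ring 0 0)" using a ring_len_big by (intro ring_reaches_hub) auto
  finally show ?thesis .
qed

lemma and_reaches_hub: "q < U \<Longrightarrow> \<tau> \<le> N \<Longrightarrow> i < U \<Longrightarrow> reach (AndN q \<tau> i) (Ring 0 0)"
proof -
  assume a: "q < U" "\<tau> \<le> N" "i < U"
  have "reach (AndN q \<tau> i) (AndN q \<tau> (U - 1))" using a by (intro and_chain) auto
  also have "reach (AndN q \<tau> (U - 1)) (OrN q \<tau>)" using a by (intro and_to_or)
  also have "reach (OrN q \<tau>) (Ring 0 0)" using a by (intro or_reaches_hub)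
  finally show ?thesis .
qed

lemma reaches_hub: "in_range v \<Longrightarrow> reach v (Ring 0 0)"
proof (cases v)
  case (Delay q \<tau> i d)
  assume "in_range v"
  hence a: "q < U" "\<tau> \<le> N" "i < U" "1 \<le> d" "d \<le> delay_len k q \<tau> i" using Delay by auto
  have "reach (Delay q \<tau> i d) (Delay q \<tau> i (delay_len k q \<tau> i))" using a by (intro delay_chain) auto
  also have "reach (Delay q \<tau> i (delay_len k q \<tau> i)) (AndN q \<tau> i)" using a by (intro delay_to_and)
  also have "reach (AndN q \<tau> i) (Ring 0 0)" using a by (intro and_reaches_hub)
  finally show ?thesis using Delay by simp
qed (use ring_reaches_hub and_reaches_hub or_reaches_hub bridge_reaches_hub in auto)

(* Ring 0 0 reaches every node: through the literal (1, 0) of term 0 it reaches every OR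
   chain and hence every ring, and from the rings every other chain. *)
lemma hub_reaches_head: "q < U \<Longrightarrow> reach (Ring 0 0) (Ring q 0)"
proof -
  assume q: "q < U"
  have lit: "literal k q 0 0 = (1, 0)" using literal_first q .
  have "reach (Ring 0 0) (Ring 0 (tap_pos k m q 0 0))"
    using tap_pos_less[of q 0 0] q width_pos by (intro ring_chain) auto
  also have "reach (Ring 0 (tap_pos k m q 0 0)) (Delay q 0 0 1)"
    using ring_to_delay[of q 0 0] q width_pos lit by simp
  also have "reach (Delay q 0 0 1) (Delay q 0 0 (delay_len k q 0 0))"
    using q width_pos delay_len_bounds[of q 0 0] by (intro delay_chain) auto
  also have "reach (Delay q 0 0 (delay_len k q 0 0)) (AndN q 0 0)"
    using q width_pos by (intro delay_to_and) auto
  also have "reach (AndN q 0 0) (AndN q 0 (U - 1))" using q by (intro and_chain) auto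
  also have "reach (AndN q 0 (U - 1)) (OrN q 0)" using q by (intro and_to_or) auto
  also have "reach (OrN q 0) (OrN q N)" using q by (intro or_chain) auto
  also have "reach (OrN q N) (Ring q 0)" using q by (rule or_to_ring)
  finally show ?thesis .
qed

lemma hub_reaches_ring: "q < U \<Longrightarrow> j < R \<Longrightarrow> reach (Ring 0 0) (Ring q j)"
  using hub_reaches_head ring_chain[of q 0 j] G.reaches_trans by blast

lemma hub_reaches_delay: "q < U \<Longrightarrow> \<tau> \<le> N \<Longrightarrow> i < U \<Longrightarrow> reach (Ring 0 0) (Delay q \<tau> i 1)"
  using hub_reaches_ring[of "snd (literal k q \<tau> i)" "tap_pos k m q \<tau> i"] literal_props[of q \<tau> i]
    tap_pos_less[of q \<tau> i] ring_to_delay[of q \<tau> i] G.reaches_trans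
  by blast

lemma hub_reaches_and: "q < U \<Longrightarrow> \<tau> \<le> N \<Longrightarrow> i < U \<Longrightarrow> reach (Ring 0 0) (AndN q \<tau> i)"
proof -
  assume a: "q < U" "\<tau> \<le> N" "i < U"
  have "reach (Ring 0 0) (Delay q \<tau> i 1)" using a by (rule hub_reaches_delay)
  also have "reach (Delay q \<tau> i 1) (Delay q \<tau> i (delay_len k q \<tau> i))"
    using a delay_len_bounds[of q \<tau> i] by (intro delay_chain) auto
  also have "reach (Delay q \<tau> i (delay_len k q \<tau> i)) (AndN q \<tau> i)" using a by (rule delay_to_and)
  finally show ?thesis .
qed

lemma hub_reaches: "in_range v \<Longrightarrow> reach (Ring 0 0) v"
proof (cases v)
  case (Delay q \<tau> i d)
  assume "in_range v"
  thus ?thesis using Delay hub_reaches_delay[of q \<tau> i] delay_chain[of q \<tau> i 1 d] G.reaches_trans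
    by auto
next
  case (OrN q \<tau>)
  assume "in_range v"
  thus ?thesis using OrN hub_reaches_and[of q \<tau> "U - 1"] and_to_or[of q \<tau>] width_pos G.reaches_trans
    by auto
next
  case (Bridge i)
  assume "in_range v"
  have "reach (Ring 0 0) (Ring 0 (R - 1))" using ring_len_big width_pos by (intro hub_reaches_ring) auto
  also have "reach (Ring 0 (R - 1)) (Bridge 0)" using ring_to_bridge[of 0] width_pos by simp
  also have "reach (Bridge 0) (Bridge i)" using \<open>in_range v\<close> Bridge by (intro bridge_chain) auto
  finally show ?thesis using Bridge by simp
qed (use hub_reaches_ring hub_reaches_and in auto)

lemma construction_strongly_connected: "strongly_connected (length (node_list k m)) G.net"
  by (rule G.net_strongly_connected[of "Ring 0 0"]) (use node_list_mem reaches_hub hub_reaches in auto)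

end

section \<open>A periodic orbit of length at least B^m\<close>

context construction begin

lemma state_at_states: "state_at t \<in> states (length (node_list k m))"
  by (simp add: state_at_def states_def)

lemma state_at_nth: "in_range v \<Longrightarrow> state_at t ! G.idx v = sem v t"
  using G.idx_mem[of v] node_list_mem by (simp add: state_at_def)

(* The ring heads hold the newest cell; so if the network states repeat with period P from
   time a on, the counter repeats with period P from cell a + lead - 1 on. *)
lemma counter_periodic:
  assumes per: "\<And>x. state_at (a + P + x) = state_at (a + x)" and j: "a + lead - 1 \<le> j"
  shows "counter B m (j + P) = counter B m j"
proof -
  define x where "x = j - (a + lead - 1)"
  have lead1: "1 \<le> lead" by (simp add: lead_def)
  have jx: "j = a + x + lead - 1" using j lead1 by (simp add: x_def)
  have "encode k (counter B m (j + P)) = encode k (counter B m j)"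
  proof (rule nth_equalityI)
    show "length (encode k (counter B m (j + P))) = length (encode k (counter B m j))"
      using encode_props valid_counter by simp
    fix q assume "q < length (encode k (counter B m (j + P)))"
    hence q: "q < U" using encode_props valid_counter by (simp add: width_def)
    have R0: "0 < R" using ring_len_big by simp
    have "state_at (a + P + x) ! G.idx (Ring q 0) = state_at (a + x) ! G.idx (Ring q 0)" using per by simp
    hence "enc_bit (a + P + x + lead - 1) q = enc_bit (a + x + lead - 1) q"
      using state_at_nth q R0 by simp
    moreover have "a + P + x + lead - 1 = j + P" using jx lead1 by simp
    ultimately show "encode k (counter B m (j + P)) ! q = encode k (counter B m j) ! q"
      using jx by (simp add: enc_bit_def)
  qed
  thus ?thesis using encode_inj valid_counter by blast
qed

lemma long_orbit: "\<exists>s p. periodic_orbit (length (node_list k m)) G.net s p \<and> B ^ m \<le> p"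
proof -
  obtain a P where orbit: "periodic_orbit (length (node_list k m)) G.net (state_at a) P"
    and per: "\<And>x. state_at (a + P + x) = state_at (a + x)"
    using trajectory_periodic_orbit[of state_at G.net] state_at_step state_at_states by metis
  have "B ^ m \<le> P"
    using counter_period_bound[of B P "a + lead - 1" m] counter_periodic[OF per] base_ge orbit
    by (simp add: periodic_orbit_def)
  thus ?thesis using orbit by blast
qed

end


section \<open>Choice of the parameters\<close>

(* Since a/4 < 1, the quantity 2k(1 + a^(k+1)) / 4^k tends to 0. *)
lemma linear_times_power_small:
  fixes a :: real
  assumes a0: "0 < a" and a4: "a < 4"
  shows "\<exists>k\<ge>2. 2 * real k * (1 + a * a ^ k) < 4 ^ k"
proof -
  define r where "r = a / 4"
  have r1: "norm r < 1" using a0 a4 by (simp add: r_def)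
  have "(\<lambda>n. 2 * (of_nat n * (1/4) ^ n) + 2 * a * (of_nat n * r ^ n)) \<longlonglongrightarrow> (2 * 0 + 2 * a * 0 :: real)"
    by (intro tendsto_intros powser_times_n_limit_0 r1) simp
  hence "eventually (\<lambda>n. 2 * (of_nat n * (1/4) ^ n) + 2 * a * (of_nat n * r ^ n) < (1::real)) sequentially"
    by (intro order_tendstoD(2)) auto
  then obtain N where N: "\<And>n. N \<le> n \<Longrightarrow> 2 * (of_nat n * (1/4) ^ n) + 2 * a * (of_nat n * r ^ n) < (1::real)"
    unfolding eventually_sequentially by blast
  define k where "k = max N 2"
  have k2: "2 \<le> k" and small: "2 * (real k * (1/4) ^ k) + 2 * a * (real k * r ^ k) < 1"
    using N[of k] by (auto simp: k_def)
  have "(2 * (real k * (1/4) ^ k) + 2 * a * (real k * r ^ k)) * 4 ^ k < 4 ^ k"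
    using small by simp
  moreover have "(1/4::real) ^ k * 4 ^ k = 1" "r ^ k * 4 ^ k = a ^ k"
    by (simp_all add: power_mult_distrib[symmetric] r_def)
  ultimately have "2 * real k * ((1/4) ^ k * 4 ^ k) + 2 * a * real k * (r ^ k * 4 ^ k) < 4 ^ k"
    by (simp add: algebra_simps)
  hence "2 * real k * (1 + a * a ^ k) < 4 ^ k"
    using \<open>(1/4::real) ^ k * 4 ^ k = 1\<close> \<open>r ^ k * 4 ^ k = a ^ k\<close> by (simp add: algebra_simps)
  thus ?thesis using k2 by blast
qed

(* For c < 2 there is k with c^(2k+2) < B, since B = C(2k,k) - 1 \<ge> 4^k / (2k) - 1. *)
lemma choose_k:
  fixes c :: real
  assumes c0: "0 < c" and c2: "c < 2"
  shows "\<exists>k\<ge>2. c ^ width k < real (base k)"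
proof -
  define a where "a = c ^ 2"
  have "c * c < 2 * 2" using c0 c2 by (intro mult_strict_mono) auto
  hence a: "0 < a" "a < 4" using c0 by (simp_all add: a_def power2_eq_square)
  obtain k where k2: "2 \<le> k" and small: "2 * real k * (1 + a * a ^ k) < 4 ^ k"
    using linear_times_power_small[OF a] by blast
  have "1 + a * a ^ k < 4 ^ k / (2 * real k)"
    using small k2 by (simp add: field_simps)
  also have "\<dots> \<le> real ((2 * k) choose k)"
    using central_binomial_lower_bound[of k] k2 by simp
  also have "\<dots> = real (base k) + 1"
  proof -
    have "1 \<le> (2 * k) choose k" by (simp add: Suc_le_eq zero_less_binomial_iff)
    thus ?thesis by (simp add: base_def length_half_list of_nat_diff)
  qed
  finally have "a * a ^ k < real (base k)" by simp
  moreover have "c ^ width k = a * a ^ k"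
  proof -
    have "c ^ (2 * k + 2) = (c ^ 2) ^ k * c ^ 2" by (simp only: power_add power_mult)
    thus ?thesis unfolding a_def width_def by (metis mult.commute)
  qed
  ultimately show ?thesis using k2 by auto
qed

lemma power_bound_eventually:
  fixes c :: real and B :: nat
  assumes c0: "0 < c" and cB: "c ^ U < real B"
  shows "\<exists>m1. \<forall>m\<ge>m1. \<forall>n\<le>U * m + C. c ^ n \<le> real B ^ m"
proof (cases "c \<le> 1")
  case True
  have "0 < real B" using cB c0 by (meson less_trans zero_less_power)
  hence "1 \<le> real B ^ m" for m by (simp add: one_le_power)
  moreover have "c ^ n \<le> 1" for n using True c0 by (simp add: power_le_one)
  ultimately show ?thesis by (meson order.trans)
next
  case False
  define \<rho> where "\<rho> = real B / c ^ U"
  have cU: "0 < c ^ U" using c0 by simp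
  have \<rho>1: "1 < \<rho>" using cB cU by (simp add: \<rho>_def)
  obtain m1 where m1: "c ^ C < \<rho> ^ m1" using real_arch_pow[OF \<rho>1] by blast
  have "c ^ n \<le> real B ^ m" if m: "m1 \<le> m" and n: "n \<le> U * m + C" for m n
  proof -
    have "c ^ n \<le> c ^ (U * m + C)" using False n by (intro power_increasing) auto
    also have "\<dots> = (c ^ U) ^ m * c ^ C" by (simp add: power_add power_mult)
    also have "\<dots> \<le> (c ^ U) ^ m * \<rho> ^ m"
    proof -
      have "c ^ C \<le> \<rho> ^ m" using m1 power_increasing[OF m, of \<rho>] \<rho>1 by linarith
      thus ?thesis using cU by (intro mult_left_mono) auto
    qed
    also have "\<dots> = (c ^ U * \<rho>) ^ m" by (simp add: power_mult_distrib)
    also have "\<dots> = real B ^ m" using c0 by (simp add: \<rho>_def)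
    finally show ?thesis .
  qed
  thus ?thesis by blast
qed

theorem theorem1:
  fixes c :: real
  assumes "0 < c" and "c < 2"
  shows "\<forall>N. \<exists>n\<ge>N. \<exists>g :: bool list \<Rightarrow> bool list.
           boolean_network n g \<and> cooperative n g \<and> bi_quadratic n g \<and>
           strongly_connected n g \<and>
           (\<exists>s p. periodic_orbit n g s p \<and> real p \<ge> c ^ n)"
proof
  fix N0 :: nat
  obtain k where k2: "2 \<le> k" and kB: "c ^ width k < real (base k)"
    using choose_k[OF assms] by blast
  obtain m1 where m1: "\<And>m n. m1 \<le> m \<Longrightarrow> n \<le> width k * m + length (aux_nodes k) \<Longrightarrow>
      c ^ n \<le> real (base k) ^ m"
    using power_bound_eventually[OF assms(1) kB] by blast
  define m where "m = max m1 (N0 + lag0 k + ntaps k + 1)"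
  interpret construction k m
    using k2 by unfold_locales (auto simp: m_def)
  define n where "n = length (node_list k m)"
  have "N0 \<le> R" by (simp add: ring_len_def m_def)
  also have "\<dots> \<le> U * R" using width_pos by simp
  finally have n: "N0 \<le> n" "n \<le> U * m + length (aux_nodes k)"
    using ring_len_le by (simp_all add: n_def length_node_list)
  obtain s p where orbit: "periodic_orbit n G.net s p" and long: "B ^ m \<le> p"
    using long_orbit unfolding n_def by blast
  have "c ^ n \<le> real (B ^ m)" using m1[OF _ n(2)] by (simp add: m_def)
  also have "\<dots> \<le> real p" using long by simp
  finally have "c ^ n \<le> real p" .
  thus "\<exists>n\<ge>N0. \<exists>g :: bool list \<Rightarrow> bool list.
           boolean_network n g \<and> cooperative n g \<and> bi_quadratic n g \<and>
           strongly_connected n g \<and> (\<exists>s p. periodic_orbit n g s p \<and> real p \<ge> c ^ n)"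
    using n(1) orbit G.net_boolean_network G.net_cooperative construction_bi_quadratic
      construction_strongly_connected unfolding n_def by blast
qed

end
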